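(* Let $0\le\tau\le\varepsilon$, $\lambda:=\tau/\varepsilon$, $u_n\in\mathcal V_{[0,1]}$, and suppose $u_{n+1}\in\mathcal V$ and $\beta_{n+1}\in\mathcal B(u_{n+1})$ satisfy \[ u_{n+1} -e^{-\tau\Delta}u_n-\lambda u_{n+1}+\lambda\overline{u_{n+1}}\mathbf{1} =\lambda\beta_{n+1} -\lambda\overline{\beta_{n+1}}\mathbf{1}. \] Then $u_{n+1}$ is a minimiser of \[ \lambda\langle u,\mathbf{1} -u \rangle_{\mathcal V} + \|u-e^{-\tau\Delta}u_n\|^2_{\mathcal V} \] over $\{u\in\mathcal V_{[0,1]}:\mathcal M(u)=\mathcal M(u_n)\}$; on this set this objective equals $(1-\lambda)\|u\|^2_{\mathcal V}-2\langle u,e^{-\tau\Delta}u_n\rangle_{\mathcal V}$ plus a constant independent of $u$. In particular, when $\tau=\varepsilon$, $u_{n+1}$ maximises $\langle u,e^{-\tau\Delta}u_n\rangle_{\mathcal V}$ over $\{u\in\mathcal V_{[0,1]}:\mathcal M(u)=\mathcal M(u_n)\}$, i.e. $u_{n+1}$ is an update of the mass-conserving graph MBO scheme.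
   Context: $G=(V,E)$ is a finite, simple, connected, undirected graph with weights $\omega_{ij}=\omega_{ji}>0$ for $ij\in E$, $\omega_{ij}=0$ otherwise; $d_i=\sum_j\omega_{ij}$, $r\in[0,1]$ fixed. $\mathcal V$ = functions $V\to\mathbb R$ with $\langle u,v\rangle_{\mathcal V}=\sum_i u_iv_id_i^r$ and norm $\|\cdot\|_{\mathcal V}$; $\mathcal V_X$ = functions $V\to X$. $(\Delta u)_i=d_i^{-r}\sum_j\omega_{ij}(u_i-u_j)$; $e^{-\tau\Delta}$ is the matrix exponential. $\mathbf 1$ all-ones; $\mathcal M(u)=\langle u,\mathbf 1\rangle_{\mathcal V}$; $\bar v=\mathcal M(v)/\mathcal M(\mathbf 1)$. $\varepsilon>0$. For $u\in\mathcal V_{[0,1]}$, $\mathcal B(u)$ = set of $\beta\in\mathcal V$ with $\beta_i\ge0$ if $u_i=0$, $\beta_i=0$ if $0<u_i<1$, $\beta_i\le0$ if $u_i=1$; $\mathcal B(u)=\emptyset$ otherwise. The mass-conserving graph MBO scheme is defined by $u_{n+1}\in\operatorname{argmin}\{\langle\mathbf 1-2e^{-\tau\Delta}u_n,u\rangle_{\mathcal V}: u\in\mathcal V_{[0,1]},\ \mathcal M(u)=\mathcal M(u_n)\}$. *)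

theory Defs
  imports Complex_Main
begin

text \<open>Vertices form a finite type 'a. Weights are a function omega :: 'a => 'a => real,
  with omega i j > 0 exactly on edges, 0 otherwise.\<close>

definition weighted_graph :: "('a::finite \<Rightarrow> 'a \<Rightarrow> real) \<Rightarrow> bool" where
  "weighted_graph \<omega> \<longleftrightarrow>
     (\<forall>i j. \<omega> i j = \<omega> j i) \<and> (\<forall>i j. 0 \<le> \<omega> i j) \<and> (\<forall>i. \<omega> i i = 0) \<and>
     (\<forall>i j. (i, j) \<in> {(x, y). 0 < \<omega> x y}\<^sup>*)"

definition deg :: "('a::finite \<Rightarrow> 'a \<Rightarrow> real) \<Rightarrow> 'a \<Rightarrow> real" where
  "deg \<omega> i = (\<Sum>j\<in>UNIV. \<omega> i j)"

definition innerV :: "('a::finite \<Rightarrow> 'a \<Rightarrow> real) \<Rightarrow> real \<Rightarrow> ('a \<Rightarrow> real) \<Rightarrow> ('a \<Rightarrow> real) \<Rightarrow> real" where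
  "innerV \<omega> r u v = (\<Sum>i\<in>UNIV. u i * v i * (deg \<omega> i) powr r)"

definition normV_sq :: "('a::finite \<Rightarrow> 'a \<Rightarrow> real) \<Rightarrow> real \<Rightarrow> ('a \<Rightarrow> real) \<Rightarrow> real" where
  "normV_sq \<omega> r u = innerV \<omega> r u u"

definition graph_Laplacian :: "('a::finite \<Rightarrow> 'a \<Rightarrow> real) \<Rightarrow> real \<Rightarrow> ('a \<Rightarrow> real) \<Rightarrow> ('a \<Rightarrow> real)" where
  "graph_Laplacian \<omega> r u = (\<lambda>i. (deg \<omega> i) powr (- r) * (\<Sum>j\<in>UNIV. \<omega> i j * (u i - u j)))"

definition heat :: "('a::finite \<Rightarrow> 'a \<Rightarrow> real) \<Rightarrow> real \<Rightarrow> real \<Rightarrow> ('a \<Rightarrow> real) \<Rightarrow> ('a \<Rightarrow> real)" where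
  "heat \<omega> r \<tau> u = (\<lambda>i. \<Sum>k. ((- \<tau>) ^ k / fact k) * ((graph_Laplacian \<omega> r ^^ k) u) i)"

definition mass :: "('a::finite \<Rightarrow> 'a \<Rightarrow> real) \<Rightarrow> real \<Rightarrow> ('a \<Rightarrow> real) \<Rightarrow> real" where
  "mass \<omega> r u = innerV \<omega> r u (\<lambda>_. 1)"

definition avg :: "('a::finite \<Rightarrow> 'a \<Rightarrow> real) \<Rightarrow> real \<Rightarrow> ('a \<Rightarrow> real) \<Rightarrow> real" where
  "avg \<omega> r v = mass \<omega> r v / mass \<omega> r (\<lambda>_. 1)"

definition V01 :: "('a \<Rightarrow> real) \<Rightarrow> bool" where
  "V01 u \<longleftrightarrow> (\<forall>i. 0 \<le> u i \<and> u i \<le> 1)"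

definition Bset :: "('a \<Rightarrow> real) \<Rightarrow> ('a \<Rightarrow> real) set" where
  "Bset u = (if V01 u then
      {\<beta>. \<forall>i. (u i = 0 \<longrightarrow> 0 \<le> \<beta> i) \<and> (0 < u i \<and> u i < 1 \<longrightarrow> \<beta> i = 0) \<and> (u i = 1 \<longrightarrow> \<beta> i \<le> 0)}
    else {})"

definition mbo_update :: "('a::finite \<Rightarrow> 'a \<Rightarrow> real) \<Rightarrow> real \<Rightarrow> real \<Rightarrow> ('a \<Rightarrow> real) \<Rightarrow> ('a \<Rightarrow> real) \<Rightarrow> bool" where
  "mbo_update \<omega> r \<tau> u u' \<longleftrightarrow>
     V01 u' \<and> mass \<omega> r u' = mass \<omega> r u \<and>
     (\<forall>v. V01 v \<and> mass \<omega> r v = mass \<omega> r u \<longrightarrow>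
        innerV \<omega> r (\<lambda>i. 1 - 2 * heat \<omega> r \<tau> u i) u' \<le> innerV \<omega> r (\<lambda>i. 1 - 2 * heat \<omega> r \<tau> u i) v)"

end

theory Submission
  imports Defs
begin

text \<open>
  Write \<open>w = e^(-\<tau>\<Delta>) u_n\<close> and \<open>v = u_(n+1)\<close>. The heat operator conserves mass,
  because \<open>M(\<Delta>x) = \<Sum>_i \<Sum>_j \<omega>_ij (x_i - x_j) = 0\<close> by symmetry of the weights, and
  centred functions \<open>x - avg(x)\<close> have mass zero; so taking the mass of the equation gives
  \<open>M(v) = M(w) = M(u_n)\<close>.

  The equation itself says \<open>w = (1 - \<lambda>) v - \<lambda> \<beta> + c\<close> for a constant \<open>c\<close>, and substituting
  this into the objective gives
  \<open>F(u) - F(v) = (1 - \<lambda>) \<parallel>u - v\<parallel>^2 + 2\<lambda> \<langle>u - v, \<beta>\<rangle> + (\<lambda> - 2c) M(u - v)\<close>.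
  On the constraint set the last term vanishes, and the middle one is nonnegative since
  \<open>\<beta> \<in> B(v)\<close> makes each \<open>(u_i - v_i) \<beta>_i\<close> nonnegative whenever \<open>0 \<le> u_i \<le> 1\<close>.
  For \<open>\<lambda> = 1\<close> the quadratic term of \<open>F\<close> disappears, leaving \<open>-2\<langle>u, w\<rangle>\<close> plus a constant.
\<close>

lemma mass_add: "mass \<omega> r (\<lambda>i. f i + g i) = mass \<omega> r f + mass \<omega> r g"
  unfolding mass_def innerV_def by (simp add: distrib_right sum.distrib)

lemma mass_diff: "mass \<omega> r (\<lambda>i. f i - g i) = mass \<omega> r f - mass \<omega> r g"
  unfolding mass_def innerV_def by (simp add: left_diff_distrib sum_subtractf)

lemma mass_cmult: "mass \<omega> r (\<lambda>i. c * f i) = c * mass \<omega> r f"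
  unfolding mass_def innerV_def by (simp add: sum_distrib_left mult_ac)

text \<open>No side condition is needed: if \<open>M(1) = 0\<close> (e.g. a single vertex, where Isabelle's
  \<open>0 powr r = 0\<close> even for \<open>r = 0\<close>) then every mass vanishes, and \<open>avg\<close> is \<open>0\<close> anyway.\<close>

lemma avg_mult_mass_one: "avg \<omega> r f * mass \<omega> r (\<lambda>_. 1) = mass \<omega> r f"
proof (cases "mass \<omega> r (\<lambda>_. 1) = 0")
  case True
  then have "\<forall>i\<in>UNIV. deg \<omega> i powr r = 0"
    unfolding mass_def innerV_def by (simp add: sum_nonneg_eq_0_iff)
  then show ?thesis
    unfolding mass_def innerV_def by simp
next
  case False
  then show ?thesis unfolding avg_def by simp
qed

lemma mass_sub_avg: "mass \<omega> r (\<lambda>i. f i - avg \<omega> r f) = 0"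
  using mass_diff[of \<omega> r f "\<lambda>_. avg \<omega> r f"] mass_cmult[of \<omega> r "avg \<omega> r f" "\<lambda>_. 1"]
  by (simp add: avg_mult_mass_one)

lemma deg_nonneg: "weighted_graph \<omega> \<Longrightarrow> 0 \<le> deg \<omega> i"
  unfolding weighted_graph_def deg_def by (simp add: sum_nonneg)

lemma deg_powr_mult_graph_Laplacian:
  assumes "weighted_graph \<omega>"
  shows "deg \<omega> i powr r * graph_Laplacian \<omega> r u i = (\<Sum>j\<in>UNIV. \<omega> i j * (u i - u j))"
proof (cases "deg \<omega> i = 0")
  case True
  with assms have "\<forall>j\<in>UNIV. \<omega> i j = 0"
    unfolding weighted_graph_def deg_def by (simp add: sum_nonneg_eq_0_iff)
  with True show ?thesis by simp
next
  case False
  with deg_nonneg[OF assms] have "deg \<omega> i powr r * deg \<omega> i powr (- r) = 1"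
    by (simp add: powr_add[symmetric] order.strict_iff_order)
  then show ?thesis
    unfolding graph_Laplacian_def by (metis mult.assoc mult_1)
qed

lemma sum_symmetric_weights_diff:
  fixes \<omega> :: "'a \<Rightarrow> 'a \<Rightarrow> real"
  assumes "\<And>i j. \<omega> i j = \<omega> j i"
  shows "(\<Sum>i\<in>A. \<Sum>j\<in>A. \<omega> i j * (u i - u j)) = 0"
proof -
  have "(\<Sum>i\<in>A. \<Sum>j\<in>A. \<omega> i j * u j) = (\<Sum>j\<in>A. \<Sum>i\<in>A. \<omega> j i * u j)"
    by (subst sum.swap) (simp add: assms)
  then show ?thesis
    by (simp add: right_diff_distrib sum_subtractf)
qed

lemma mass_graph_Laplacian:
  assumes "weighted_graph \<omega>"
  shows "mass \<omega> r (graph_Laplacian \<omega> r u) = 0"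
proof -
  have "mass \<omega> r (graph_Laplacian \<omega> r u) = (\<Sum>i\<in>UNIV. \<Sum>j\<in>UNIV. \<omega> i j * (u i - u j))"
    unfolding mass_def innerV_def
    using deg_powr_mult_graph_Laplacian[OF assms] by (simp add: mult.commute)
  also have "\<dots> = 0"
    using assms unfolding weighted_graph_def by (intro sum_symmetric_weights_diff) simp
  finally show ?thesis .
qed

definition l1_norm :: "('a::finite \<Rightarrow> real) \<Rightarrow> real" where
  "l1_norm u = (\<Sum>i\<in>UNIV. \<bar>u i\<bar>)"

lemma abs_le_l1_norm: "\<bar>u i\<bar> \<le> l1_norm u"
  unfolding l1_norm_def by (rule member_le_sum) auto

lemma l1_norm_graph_Laplacian_le:
  assumes "weighted_graph \<omega>"
  shows "l1_norm (graph_Laplacian \<omega> r u) \<le> (\<Sum>i\<in>UNIV. 2 * deg \<omega> i powr (- r) * deg \<omega> i) * l1_norm u"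
proof -
  have "\<bar>graph_Laplacian \<omega> r u i\<bar> \<le> 2 * deg \<omega> i powr (- r) * deg \<omega> i * l1_norm u" for i
  proof -
    have "\<bar>\<omega> i j * (u i - u j)\<bar> \<le> \<omega> i j * (2 * l1_norm u)" for j
    proof -
      have "\<bar>u i - u j\<bar> \<le> 2 * l1_norm u"
        using abs_le_l1_norm[of u i] abs_le_l1_norm[of u j] by linarith
      moreover have "0 \<le> \<omega> i j"
        using assms unfolding weighted_graph_def by simp
      ultimately show ?thesis
        by (simp add: abs_mult mult_left_mono)
    qed
    then have "\<bar>\<Sum>j\<in>UNIV. \<omega> i j * (u i - u j)\<bar> \<le> deg \<omega> i * (2 * l1_norm u)"
      unfolding deg_def sum_distrib_right by (intro order_trans[OF sum_abs] sum_mono)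
    then have "deg \<omega> i powr (- r) * \<bar>\<Sum>j\<in>UNIV. \<omega> i j * (u i - u j)\<bar>
        \<le> deg \<omega> i powr (- r) * (deg \<omega> i * (2 * l1_norm u))"
      by (rule mult_left_mono) simp
    then show ?thesis
      by (simp add: graph_Laplacian_def abs_mult mult_ac)
  qed
  then show ?thesis
    unfolding l1_norm_def[of "graph_Laplacian \<omega> r u"] sum_distrib_right
    by (rule sum_mono)
qed

lemma summable_exp_series_funpow:
  fixes L :: "('a::finite \<Rightarrow> real) \<Rightarrow> 'a \<Rightarrow> real"
  assumes "0 \<le> B" "\<And>u. l1_norm (L u) \<le> B * l1_norm u"
  shows "summable (\<lambda>k. (t ^ k / fact k) * (L ^^ k) u i)"
proof -
  have L: "l1_norm ((L ^^ k) u) \<le> B ^ k * l1_norm u" for k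
  proof (induction k)
    case 0
    then show ?case by simp
  next
    case (Suc k)
    have "l1_norm ((L ^^ Suc k) u) \<le> B * l1_norm ((L ^^ k) u)"
      using assms(2) by simp
    also have "\<dots> \<le> B * (B ^ k * l1_norm u)"
      using Suc assms(1) by (rule mult_left_mono)
    finally show ?case by simp
  qed
  have "norm ((t ^ k / fact k) * (L ^^ k) u i) \<le> inverse (fact k) * (\<bar>t\<bar> * B) ^ k * l1_norm u" for k
  proof -
    have "norm ((t ^ k / fact k) * (L ^^ k) u i) = \<bar>t\<bar> ^ k / fact k * \<bar>(L ^^ k) u i\<bar>"
      by (simp add: abs_mult power_abs)
    also have "\<dots> \<le> \<bar>t\<bar> ^ k / fact k * (B ^ k * l1_norm u)"
      using order_trans[OF abs_le_l1_norm L] by (intro mult_left_mono) simp_all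
    finally show ?thesis
      by (simp add: power_mult_distrib divide_inverse mult_ac)
  qed
  moreover have "summable (\<lambda>k. inverse (fact k) * (\<bar>t\<bar> * B) ^ k * l1_norm u)"
    by (intro summable_mult2 summable_exp)
  ultimately show ?thesis
    by (rule summable_comparison_test'[rotated])
qed

lemma summable_heat_series:
  assumes "weighted_graph \<omega>"
  shows "summable (\<lambda>k. ((- \<tau>) ^ k / fact k) * (graph_Laplacian \<omega> r ^^ k) u i)"
  using l1_norm_graph_Laplacian_le[OF assms]
  by (intro summable_exp_series_funpow[where B = "\<Sum>i\<in>UNIV. 2 * deg \<omega> i powr (- r) * deg \<omega> i"])
    (simp_all add: sum_nonneg deg_nonneg[OF assms])

lemma mass_heat:
  assumes "weighted_graph \<omega>"
  shows "mass \<omega> r (heat \<omega> r \<tau> u) = mass \<omega> r u"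
proof -
  define a where "a k i = ((- \<tau>) ^ k / fact k) * (graph_Laplacian \<omega> r ^^ k) u i" for k i
  have "mass \<omega> r (heat \<omega> r \<tau> u) = (\<Sum>i\<in>UNIV. \<Sum>k. a k i * deg \<omega> i powr r)"
    unfolding mass_def innerV_def heat_def a_def
    using summable_heat_series[OF assms] by (simp add: suminf_mult2)
  also have "\<dots> = (\<Sum>k. \<Sum>i\<in>UNIV. a k i * deg \<omega> i powr r)"
    unfolding a_def using summable_heat_series[OF assms]
    by (intro suminf_sum[symmetric] summable_mult2)
  also have "\<dots> = (\<Sum>k. (- \<tau>) ^ k / fact k * mass \<omega> r ((graph_Laplacian \<omega> r ^^ k) u))"
    unfolding a_def mass_def innerV_def by (simp add: sum_distrib_left mult_ac)
  also have "\<dots> = (\<Sum>k. if k = 0 then mass \<omega> r u else 0)"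
    by (rule arg_cong[where f = suminf]) (auto simp: fun_eq_iff gr0_conv_Suc mass_graph_Laplacian[OF assms])
  also have "\<dots> = mass \<omega> r u"
    using sums_single[of 0 "\<lambda>_. mass \<omega> r u"] by (simp add: sums_iff)
  finally show ?thesis .
qed

lemma mass_eq_if_Euler_Lagrange:
  assumes "\<And>i. v i - w i - lam * v i + lam * avg \<omega> r v = lam * \<beta> i - lam * avg \<omega> r \<beta>"
  shows "mass \<omega> r v = mass \<omega> r w"
proof -
  have "(\<lambda>i. v i - w i) = (\<lambda>i. lam * (\<beta> i - avg \<omega> r \<beta>) + lam * (v i - avg \<omega> r v))"
    using assms by (simp add: fun_eq_iff algebra_simps)
  then have "mass \<omega> r (\<lambda>i. v i - w i) = 0"
    by (simp add: mass_add mass_cmult mass_sub_avg)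
  then show ?thesis
    by (simp add: mass_diff)
qed

lemma objective_expand:
  "lam * innerV \<omega> r u (\<lambda>i. 1 - u i) + normV_sq \<omega> r (\<lambda>i. u i - w i)
     = (1 - lam) * normV_sq \<omega> r u - 2 * innerV \<omega> r u w + (lam * mass \<omega> r u + normV_sq \<omega> r w)"
  unfolding normV_sq_def mass_def innerV_def
  by (simp add: sum_distrib_left sum.distrib sum_subtractf power2_eq_square algebra_simps)

lemma objective_diff:
  assumes "\<And>i. w i = (1 - lam) * v i - lam * \<beta> i + c"
  shows "lam * innerV \<omega> r u (\<lambda>i. 1 - u i) + normV_sq \<omega> r (\<lambda>i. u i - w i)
       - (lam * innerV \<omega> r v (\<lambda>i. 1 - v i) + normV_sq \<omega> r (\<lambda>i. v i - w i))
     = (1 - lam) * normV_sq \<omega> r (\<lambda>i. u i - v i) + 2 * lam * innerV \<omega> r (\<lambda>i. u i - v i) \<beta>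
       + (lam - 2 * c) * mass \<omega> r (\<lambda>i. u i - v i)"
  unfolding normV_sq_def mass_def innerV_def assms sum_distrib_left
    sum.distrib[symmetric] sum_subtractf[symmetric]
  by (rule sum.cong) (simp_all add: algebra_simps)

lemma V01_if_Bset: "\<beta> \<in> Bset v \<Longrightarrow> V01 v"
  unfolding Bset_def by (auto split: if_splits)

lemma innerV_Bset_nonneg:
  assumes "\<beta> \<in> Bset v" "V01 u"
  shows "0 \<le> innerV \<omega> r (\<lambda>i. u i - v i) \<beta>"
  unfolding innerV_def
proof (rule sum_nonneg)
  fix i
  have v: "0 \<le> v i" "v i \<le> 1" and u: "0 \<le> u i" "u i \<le> 1"
    using V01_if_Bset[OF assms(1)] assms(2) unfolding V01_def by auto
  have \<beta>: "(v i = 0 \<longrightarrow> 0 \<le> \<beta> i) \<and> (0 < v i \<and> v i < 1 \<longrightarrow> \<beta> i = 0) \<and> (v i = 1 \<longrightarrow> \<beta> i \<le> 0)"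
    using assms(1) V01_if_Bset[OF assms(1)] unfolding Bset_def by simp
  have "0 \<le> (u i - v i) * \<beta> i"
    using v u \<beta> by (cases "v i = 0"; cases "v i = 1") (auto intro: mult_nonpos_nonpos)
  then show "0 \<le> (u i - v i) * \<beta> i * deg \<omega> i powr r"
    by simp
qed

lemma objective_le_if_Bset:
  assumes lam: "0 \<le> lam" "lam \<le> 1"
    and \<beta>: "\<beta> \<in> Bset v"
    and w: "\<And>i. w i = (1 - lam) * v i - lam * \<beta> i + c"
    and u: "V01 u" "mass \<omega> r u = mass \<omega> r v"
  shows "lam * innerV \<omega> r v (\<lambda>i. 1 - v i) + normV_sq \<omega> r (\<lambda>i. v i - w i)
    \<le> lam * innerV \<omega> r u (\<lambda>i. 1 - u i) + normV_sq \<omega> r (\<lambda>i. u i - w i)"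
proof -
  have "0 \<le> normV_sq \<omega> r (\<lambda>i. u i - v i)"
    unfolding normV_sq_def innerV_def by (simp add: sum_nonneg)
  then have "0 \<le> (1 - lam) * normV_sq \<omega> r (\<lambda>i. u i - v i)"
    using lam by simp
  moreover have "0 \<le> lam * innerV \<omega> r (\<lambda>i. u i - v i) \<beta>"
    using lam innerV_Bset_nonneg[OF \<beta> u(1)] by simp
  moreover have "mass \<omega> r (\<lambda>i. u i - v i) = 0"
    using u(2) by (simp add: mass_diff)
  ultimately show ?thesis
    using objective_diff[of w lam v \<beta> c \<omega> r u, OF w] by simp
qed

lemma innerV_one_minus_twice:
  "innerV \<omega> r (\<lambda>i. 1 - 2 * f i) v = mass \<omega> r v - 2 * innerV \<omega> r v f"
  unfolding innerV_def mass_def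
  by (simp add: sum_distrib_left sum_subtractf[symmetric] algebra_simps)

lemma mbo_update_if_maximiser:
  assumes "V01 u'" "mass \<omega> r u' = mass \<omega> r u"
    and "\<And>v. V01 v \<Longrightarrow> mass \<omega> r v = mass \<omega> r u
                \<Longrightarrow> innerV \<omega> r v (heat \<omega> r \<tau> u) \<le> innerV \<omega> r u' (heat \<omega> r \<tau> u)"
  shows "mbo_update \<omega> r \<tau> u u'"
  using assms unfolding mbo_update_def innerV_one_minus_twice by fastforce

theorem theorem13:
  fixes \<omega> :: "'a::finite \<Rightarrow> 'a \<Rightarrow> real"
    and r \<epsilon> \<tau> :: real and un un1 \<beta> :: "'a \<Rightarrow> real"
  assumes G: "weighted_graph \<omega>"
    and r: "0 \<le> r" "r \<le> 1"
    and eps: "0 < \<epsilon>"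
    and tau: "0 \<le> \<tau>" "\<tau> \<le> \<epsilon>"
    and un: "V01 un"
    and beta: "\<beta> \<in> Bset un1"
    and eq: "\<And>i. un1 i - heat \<omega> r \<tau> un i - (\<tau> / \<epsilon>) * un1 i + (\<tau> / \<epsilon>) * avg \<omega> r un1
                 = (\<tau> / \<epsilon>) * \<beta> i - (\<tau> / \<epsilon>) * avg \<omega> r \<beta>"
  shows "let lam = \<tau> / \<epsilon>; w = heat \<omega> r \<tau> un;
             F = (\<lambda>u. lam * innerV \<omega> r u (\<lambda>i. 1 - u i) + normV_sq \<omega> r (\<lambda>i. u i - w i));
             C = {u. V01 u \<and> mass \<omega> r u = mass \<omega> r un}
         in un1 \<in> C \<and> (\<forall>u\<in>C. F un1 \<le> F u)
            \<and> (\<exists>c. \<forall>u\<in>C. F u = (1 - lam) * normV_sq \<omega> r u - 2 * innerV \<omega> r u w + c)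
            \<and> (\<tau> = \<epsilon> \<longrightarrow> (\<forall>u\<in>C. innerV \<omega> r u w \<le> innerV \<omega> r un1 w) \<and> mbo_update \<omega> r \<tau> un un1)"
proof -
  define lam where "lam = \<tau> / \<epsilon>"
  define w where "w = heat \<omega> r \<tau> un"
  define F where "F u = lam * innerV \<omega> r u (\<lambda>i. 1 - u i) + normV_sq \<omega> r (\<lambda>i. u i - w i)" for u
  define C where "C = {u. V01 u \<and> mass \<omega> r u = mass \<omega> r un}"
  have lam: "0 \<le> lam" "lam \<le> 1"
    unfolding lam_def using eps tau by simp_all
  have un1_C: "un1 \<in> C"
    unfolding C_def using V01_if_Bset[OF beta] mass_eq_if_Euler_Lagrange[OF eq] mass_heat[OF G]
    by simp
  have w_eq: "w i = (1 - lam) * un1 i - lam * \<beta> i + lam * (avg \<omega> r \<beta> + avg \<omega> r un1)" for i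
    using eq[of i] unfolding lam_def w_def by (simp add: algebra_simps)
  have min: "\<forall>u\<in>C. F un1 \<le> F u"
    using un1_C unfolding F_def C_def using lam beta w_eq by (auto intro: objective_le_if_Bset)
  have F_eq: "\<forall>u\<in>C. F u = (1 - lam) * normV_sq \<omega> r u - 2 * innerV \<omega> r u w
      + (lam * mass \<omega> r un + normV_sq \<omega> r w)"
    unfolding F_def C_def objective_expand by simp
  have max: "\<forall>u\<in>C. innerV \<omega> r u w \<le> innerV \<omega> r un1 w" if "\<tau> = \<epsilon>"
    using min F_eq un1_C eps that by (simp add: lam_def)
  have "mbo_update \<omega> r \<tau> un un1" if "\<tau> = \<epsilon>"
    using un1_C max[OF that] unfolding C_def w_def by (auto intro: mbo_update_if_maximiser)
  with un1_C min F_eq max show ?thesis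
    unfolding Let_def lam_def[symmetric] w_def[symmetric] F_def[symmetric] C_def[symmetric]
    by blast
qed

end
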